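(* Let $n\ge 1$ and $k\ge 3$ be integers and $p:=k-2$. Let $\{v_1,\dots,v_n\}$ be an orthonormal basis of $\mathbb{R}^n$ and $\lambda_r,\kappa_r\in\mathbb{R}$ with $\kappa_r<0$ for all $r$. Let $\mathcal A=\sum_{r=1}^n\lambda_r v_r^{\otimes k}$, $K=\sum_{r=1}^n\kappa_r v_rv_r^\top$, and consider $\dot x=Kx+\mathcal A x^{k-1}$ with initial condition $x(0)=x_0$ and modal coordinates $y_r(t)=v_r^\top x(t)$. Let $\mathcal I_+:=\{r:\lambda_r>0\}$, $\mathcal I_-:=\{r:\lambda_r<0\}$; for $r\in\mathcal I_+$ let $c_r:=(-\kappa_r/\lambda_r)^{1/p}>0$, and for $p$ odd and $r\in\mathcal I_-$ let $c_r:=-(\kappa_r/\lambda_r)^{1/p}<0$. (i) If $p$ is even and there exists $r\in\mathcal I_+$ with $|v_r^\top x_0|>c_r$, then the solution escapes to infinity in finite time. (ii) If $p$ is odd: if there exists $r\in\mathcal I_+$ with $v_r^\top x_0>c_r$, then the solution escapes in finite time with $y_r(t)\to+\infty$; moreover, for $r\in\mathcal I_+$, any initial condition with $v_r^\top x_0<c_r$ (in particular any $v_r^\top x_0<0$) yields a forward-complete mode $y_r$ converging to $0$. If there exists $r\in\mathcal I_-$ with $v_r^\top x_0<c_r$, then the solution escapes in finite time with $y_r(t)\to-\infty$. In all cases, the (first) finite-time escape time is $T_{\mathrm{esc}}=\min_{r} T_{\mathrm{esc},r}$, where for each mode $r$ with $\lambda_r\neq 0$ whose initial value $y_{r,0}:=v_r^\top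 x_0$ satisfies one of the escape conditions above, $$T_{\mathrm{esc},r}=\frac{1}{p|\kappa_r|}\ln\!\left(\frac{\lambda_r/|\kappa_r|}{\lambda_r/|\kappa_r|-y_{r,0}^{-p}}\right),$$ and $T_{\mathrm{esc},r}=+\infty$ for modes that satisfy no escape condition.
   Context: For $v\in\mathbb{R}^n$, $v^{\otimes k}$ is the $k$th-order tensor with entries $(v^{\otimes k})_{i_1\cdots i_k}=v_{i_1}\cdots v_{i_k}$. For a $k$th-order tensor $\mathcal A=(a_{i_1\cdots i_k})$ and $x\in\mathbb{R}^n$, $(\mathcal A x^{k-1})_i=\sum_{i_2,\dots,i_k=1}^n a_{i i_2\cdots i_k}x_{i_2}\cdots x_{i_k}$. Escape to infinity in finite time means $\|x(t)\|_2\to\infty$ as $t$ approaches a finite time. *)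

theory Defs
  imports "HOL-Analysis.Analysis"
begin

text \<open>Tensors of order k over index type 'n are represented as functions on
  index lists (only lists of length k are meaningful).\<close>
type_synonym 'n tensor = "'n list \<Rightarrow> real"

definition tensor_pow :: "real^'n \<Rightarrow> 'n tensor" where
  "tensor_pow v = (\<lambda>is. prod_list (map (\<lambda>i. v $ i) is))"

definition tensor_apply :: "'n::finite tensor \<Rightarrow> nat \<Rightarrow> real^'n \<Rightarrow> real^'n" where
  "tensor_apply A k x = (\<chi> i. \<Sum>is\<in>{is. length is = k - 1}.
      A (i # is) * prod_list (map (\<lambda>j. x $ j) is))"

definition outer :: "real^'n \<Rightarrow> real^'n \<Rightarrow> real^'n^'n" where
  "outer v w = (\<chi> i j. v $ i * w $ j)"

definition ode_sol :: "(real^'n \<Rightarrow> real^'n) \<Rightarrow> real^'n \<Rightarrow> real \<Rightarrow> (real \<Rightarrow> real^'n) \<Rightarrow> bool" where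
  "ode_sol F x0 T x \<longleftrightarrow> x 0 = x0 \<and>
     (\<forall>t\<in>{0..<T}. (x has_vector_derivative F (x t)) (at t within {0..<T}))"

definition escapes_at :: "(real^'n \<Rightarrow> real^'n) \<Rightarrow> real^'n \<Rightarrow> real \<Rightarrow> bool" where
  "escapes_at F x0 T \<longleftrightarrow> 0 < T \<and>
     (\<forall>T' x. 0 < T' \<and> ode_sol F x0 T' x \<longrightarrow> T' \<le> T) \<and>
     (\<exists>x. ode_sol F x0 T x) \<and>
     (\<forall>x. ode_sol F x0 T x \<longrightarrow> filterlim (\<lambda>t. norm (x t)) at_top (at_left T))"

definition mode_escapes ::
  "(real^'n \<Rightarrow> real^'n) \<Rightarrow> real^'n \<Rightarrow> real^'n \<Rightarrow> (real \<Rightarrow> real) \<Rightarrow> real \<Rightarrow> real filter \<Rightarrow> bool" where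
  "mode_escapes F x0 w g T L \<longleftrightarrow> 0 < T \<and> (\<exists>y. y 0 = w \<bullet> x0 \<and>
     (\<forall>t\<in>{0..<T}. (y has_real_derivative g (y t)) (at t within {0..<T})) \<and>
     filterlim y L (at_left T) \<and>
     (\<forall>T' x. 0 < T' \<and> ode_sol F x0 T' x \<longrightarrow> (\<forall>t\<in>{0..<T'}. t < T \<longrightarrow> w \<bullet> x t = y t)))"

definition mode_global_to_zero ::
  "(real^'n \<Rightarrow> real^'n) \<Rightarrow> real^'n \<Rightarrow> real^'n \<Rightarrow> (real \<Rightarrow> real) \<Rightarrow> bool" where
  "mode_global_to_zero F x0 w g \<longleftrightarrow> (\<exists>y. y 0 = w \<bullet> x0 \<and>
     (\<forall>t\<ge>0. (y has_real_derivative g (y t)) (at t within {0..})) \<and>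
     (y \<longlongrightarrow> 0) at_top \<and>
     (\<forall>T' x. 0 < T' \<and> ode_sol F x0 T' x \<longrightarrow> (\<forall>t\<in>{0..<T'}. w \<bullet> x t = y t)))"

definition c_thr :: "nat \<Rightarrow> real \<Rightarrow> real \<Rightarrow> real" where
  "c_thr p lam kap = (if lam > 0 then root p (- kap / lam) else - root p (kap / lam))"

definition esc_cond :: "nat \<Rightarrow> real \<Rightarrow> real \<Rightarrow> real \<Rightarrow> bool" where
  "esc_cond p lam kap y0 \<longleftrightarrow>
     (even p \<and> lam > 0 \<and> \<bar>y0\<bar> > c_thr p lam kap) \<or>
     (odd p \<and> lam > 0 \<and> y0 > c_thr p lam kap) \<or>
     (odd p \<and> lam < 0 \<and> y0 < c_thr p lam kap)"

definition T_esc_r :: "nat \<Rightarrow> real \<Rightarrow> real \<Rightarrow> real \<Rightarrow> real" where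
  "T_esc_r p lam kap y0 = 1 / (real p * \<bar>kap\<bar>) *
     ln ((lam / \<bar>kap\<bar>) / (lam / \<bar>kap\<bar> - 1 / y0 ^ p))"

end

(* Both A and K are diagonal in the orthonormal basis v, so the vector field is
   F x = \<Sum>r g_r (v_r \<bullet> x) v_r with g_r y = \<kappa>_r y + \<lambda>_r y^(p+1), and by uniqueness for the
   locally Lipschitz scalar equation every modal coordinate y_r = v_r \<bullet> x solves the Bernoulli
   equation y' = g_r y on its own.  The substitution u = y^(-p) linearises it and gives
   y(t) = y0 e^(\<kappa> t) D(t)^(-1/p) with D(t) = 1 + (\<lambda> y0^p / \<kappa>) (1 - e^(p \<kappa> t)).
   D reaches 0 at a positive time, namely T_esc_r, exactly when \<lambda> y0^p > -\<kappa>, and this is what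
   the threshold conditions on v_r \<bullet> x0 say; if \<lambda> y0^p < -\<kappa> then D stays positive and y \<rightarrow> 0.
   The sum of the modal solutions solves the system up to the first escape time, and no solution
   survives beyond it because |y_r| \<le> \<parallel>x\<parallel> for the escaping mode r. *)

theory Submission
  imports Defs
begin

section \<open>The scalar Bernoulli equation\<close>

definition bernoulli_denom :: "nat \<Rightarrow> real \<Rightarrow> real \<Rightarrow> real \<Rightarrow> real \<Rightarrow> real" where
  "bernoulli_denom p lam kap y0 t = 1 + lam * y0 ^ p / kap * (1 - exp (real p * kap * t))"

definition bernoulli_sol :: "nat \<Rightarrow> real \<Rightarrow> real \<Rightarrow> real \<Rightarrow> real \<Rightarrow> real" where
  "bernoulli_sol p lam kap y0 t =
     y0 * exp (kap * t) * bernoulli_denom p lam kap y0 t powr (- 1 / real p)"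

lemma bernoulli_sol_0 [simp]: "bernoulli_sol p lam kap y0 0 = y0"
  by (simp add: bernoulli_sol_def bernoulli_denom_def)

lemma bernoulli_sol_has_real_derivative:
  assumes "0 < p" "kap \<noteq> 0" and D: "0 < bernoulli_denom p lam kap y0 t"
  shows "(bernoulli_sol p lam kap y0 has_real_derivative
           kap * bernoulli_sol p lam kap y0 t + lam * bernoulli_sol p lam kap y0 t ^ Suc p) (at t)"
proof -
  let ?D = "bernoulli_denom p lam kap y0 t" and ?e = "exp (kap * t)"
  have dD: "(bernoulli_denom p lam kap y0 has_real_derivative - (lam * y0 ^ p * real p * ?e ^ p)) (at t)"
    unfolding bernoulli_denom_def [abs_def]
    by (rule derivative_eq_intros refl
        | use \<open>kap \<noteq> 0\<close> in \<open>simp add: exp_of_nat_mult [symmetric] mult_ac\<close>)+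
  have de: "((\<lambda>t. y0 * exp (kap * t)) has_real_derivative y0 * (kap * ?e)) (at t)"
    by (auto intro!: derivative_eq_intros)
  have deriv: "(bernoulli_sol p lam kap y0 has_real_derivative
      y0 * (kap * ?e) * ?D powr (- 1 / real p)
      + y0 * ?e * ((- 1 / real p) * ?D powr (- 1 / real p - real 1) * - (lam * y0 ^ p * real p * ?e ^ p))) (at t)"
    unfolding bernoulli_sol_def [abs_def]
    by (rule DERIV_cong [OF DERIV_mult [OF de DERIV_fun_powr [OF dD D]]]) simp
  have sol_power: "bernoulli_sol p lam kap y0 t ^ Suc p
      = bernoulli_sol p lam kap y0 t * (y0 ^ p * ?e ^ p / ?D)"
  proof -
    have "(?D powr (- 1 / real p)) ^ p = 1 / ?D"
      using D \<open>0 < p\<close> by (simp add: powr_power powr_neg_one del: powr_neg_one')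
    then show ?thesis
      by (simp add: bernoulli_sol_def power_mult_distrib)
  qed
  have denom_powr: "?D powr (- 1 / real p - real 1) = ?D powr (- 1 / real p) / ?D"
    using D by (simp add: powr_diff)
  show ?thesis
    using deriv unfolding sol_power denom_powr
    by (rule DERIV_cong) (use \<open>0 < p\<close> D in \<open>simp add: bernoulli_sol_def field_simps\<close>)
qed

lemma exp_T_esc_r:
  assumes "0 < p" "kap < 0" "- kap < lam * y0 ^ p"
  shows "exp (real p * kap * T_esc_r p lam kap y0) = 1 + kap / (lam * y0 ^ p)"
proof -
  have "y0 ^ p \<noteq> 0" "lam \<noteq> 0"
    using assms by (auto simp: power_0_left)
  then have q: "(lam / \<bar>kap\<bar>) / (lam / \<bar>kap\<bar> - 1 / y0 ^ p) = 1 / (1 + kap / (lam * y0 ^ p))"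
    using assms by (simp add: field_simps)
  have "0 < lam * y0 ^ p"
    using assms by linarith
  then have "- 1 < kap / (lam * y0 ^ p)"
    using assms by (simp add: less_divide_eq)
  then have "0 < 1 + kap / (lam * y0 ^ p)"
    by linarith
  then show ?thesis
    using assms unfolding T_esc_r_def q by (simp add: ln_div)
qed

lemma T_esc_r_pos:
  assumes "0 < p" "kap < 0" "- kap < lam * y0 ^ p"
  shows "0 < T_esc_r p lam kap y0"
proof -
  have "exp (real p * kap * T_esc_r p lam kap y0) < 1"
    using assms by (simp add: exp_T_esc_r divide_neg_pos)
  then have "real p * kap * T_esc_r p lam kap y0 < 0"
    by simp
  moreover have "real p * kap < 0"
    using assms by (simp add: mult_pos_neg)
  ultimately show ?thesis
    by (simp add: mult_less_0_iff)
qed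

lemma bernoulli_denom_T_esc_r:
  assumes "0 < p" "kap < 0" "- kap < lam * y0 ^ p"
  shows "bernoulli_denom p lam kap y0 (T_esc_r p lam kap y0) = 0"
proof -
  have "y0 \<noteq> 0" "lam \<noteq> 0"
    using assms by (auto simp: power_0_left)
  then show ?thesis
    using assms unfolding bernoulli_denom_def exp_T_esc_r [OF assms] by (simp add: field_simps)
qed

lemma bernoulli_denom_pos:
  assumes "0 < p" "kap < 0" "0 \<le> t"
    and before_escape: "- kap < lam * y0 ^ p \<Longrightarrow> t < T_esc_r p lam kap y0"
  shows "0 < bernoulli_denom p lam kap y0 t"
proof -
  define c where "c = lam * y0 ^ p / kap"
  define e where "e = exp (real p * kap * t)"
  have "real p * kap * t \<le> 0"
    using assms by (intro mult_nonpos_nonneg mult_nonneg_nonpos) auto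
  then have "e \<le> 1"
    by (simp add: e_def)
  show ?thesis
  proof (cases "- kap < lam * y0 ^ p")
    case True
    have "exp (real p * kap * T_esc_r p lam kap y0) < e"
      using assms True by (simp add: e_def)
    moreover have "exp (real p * kap * T_esc_r p lam kap y0) = 1 + 1 / c"
      using exp_T_esc_r [OF assms(1,2) True] by (simp add: c_def)
    ultimately have "1 + 1 / c < e"
      by simp
    have "c < 0"
      using assms True by (simp add: c_def divide_pos_neg)
    then have "c * e < c * (1 + 1 / c)"
      using \<open>1 + 1 / c < e\<close> by (simp add: mult_less_cancel_left)
    also have "\<dots> = c + 1"
      using \<open>c < 0\<close> by (simp add: distrib_left)
    finally show ?thesis
      unfolding bernoulli_denom_def c_def [symmetric] e_def [symmetric] by (simp add: right_diff_distrib)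
  next
    case False
    then have "- 1 \<le> c"
      using assms by (simp add: c_def field_simps)
    then have "- (1 - e) \<le> c * (1 - e)"
      using \<open>e \<le> 1\<close> by (metis mult_minus_left mult_right_mono mult_1 diff_ge_0_iff_ge)
    moreover have "0 < e"
      by (simp add: e_def)
    ultimately show ?thesis
      by (simp add: bernoulli_denom_def c_def [symmetric] e_def [symmetric])
  qed
qed

lemma bernoulli_sol_has_real_derivative_before_escape:
  assumes "0 < p" "kap < 0" "0 \<le> t" "- kap < lam * y0 ^ p \<Longrightarrow> t < T_esc_r p lam kap y0"
  shows "(bernoulli_sol p lam kap y0 has_real_derivative
           kap * bernoulli_sol p lam kap y0 t + lam * bernoulli_sol p lam kap y0 t ^ Suc p) (at t within S)"
proof -
  have "0 < bernoulli_denom p lam kap y0 t"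
    using assms by (rule bernoulli_denom_pos)
  moreover have "kap \<noteq> 0"
    using assms by simp
  ultimately show ?thesis
    using bernoulli_sol_has_real_derivative [OF \<open>0 < p\<close>] has_field_derivative_at_within by blast
qed

lemma bernoulli_sol_tendsto_escape:
  assumes "0 < p" "kap < 0" "- kap < lam * y0 ^ p"
  shows bernoulli_sol_tendsto_at_top:
      "0 < y0 \<Longrightarrow> filterlim (bernoulli_sol p lam kap y0) at_top (at_left (T_esc_r p lam kap y0))"
    and bernoulli_sol_tendsto_at_bot:
      "y0 < 0 \<Longrightarrow> filterlim (bernoulli_sol p lam kap y0) at_bot (at_left (T_esc_r p lam kap y0))"
proof -
  let ?T = "T_esc_r p lam kap y0" and ?D = "bernoulli_denom p lam kap y0"
  have "(?D \<longlongrightarrow> ?D ?T) (at_left ?T)"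
    unfolding bernoulli_denom_def [abs_def] by (intro tendsto_intros)
  then have "(?D \<longlongrightarrow> 0) (at_left ?T)"
    using bernoulli_denom_T_esc_r [OF assms] by simp
  moreover have D_pos: "\<forall>\<^sub>F t in at_left ?T. 0 < ?D t"
    unfolding eventually_at_left_field using T_esc_r_pos [OF assms]
    by (intro exI [of _ 0]) (auto intro: bernoulli_denom_pos assms)
  ultimately have "((\<lambda>t. ?D t powr (1 / real p)) \<longlongrightarrow> 0) (at_left ?T)"
    using \<open>0 < p\<close> by (intro tendsto_zero_powrI tendsto_const) (auto elim: eventually_mono)
  then have blowup: "filterlim (\<lambda>t. inverse (?D t powr (1 / real p))) at_top (at_left ?T)"
    using D_pos by (intro filterlim_inverse_at_top) (auto elim: eventually_mono)
  have sol_eq: "bernoulli_sol p lam kap y0 = (\<lambda>t. y0 * exp (kap * t) * inverse (?D t powr (1 / real p)))"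
    by (simp add: bernoulli_sol_def powr_minus fun_eq_iff)
  have lim: "((\<lambda>t. y0 * exp (kap * t)) \<longlongrightarrow> y0 * exp (kap * ?T)) (at_left ?T)"
    by (intro tendsto_intros)
  show "filterlim (bernoulli_sol p lam kap y0) at_top (at_left ?T)" if "0 < y0"
    unfolding sol_eq by (rule filterlim_tendsto_pos_mult_at_top [OF lim _ blowup]) (simp add: that)
  show "filterlim (bernoulli_sol p lam kap y0) at_bot (at_left ?T)" if "y0 < 0"
    unfolding sol_eq by (rule filterlim_tendsto_neg_mult_at_bot [OF lim _ blowup]) (simp add: that mult_neg_pos)
qed

lemma bernoulli_sol_tendsto_at_infinity:
  assumes "0 < p" "kap < 0" "- kap < lam * y0 ^ p"
  shows "filterlim (bernoulli_sol p lam kap y0) at_infinity (at_left (T_esc_r p lam kap y0))"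
proof (cases "0 < y0")
  case True
  then show ?thesis
    using bernoulli_sol_tendsto_at_top [OF assms] at_top_le_at_infinity filterlim_mono by blast
next
  case False
  then have "y0 < 0"
    using assms by (cases "y0 = 0") (auto simp: power_0_left)
  then show ?thesis
    using bernoulli_sol_tendsto_at_bot [OF assms] at_bot_le_at_infinity filterlim_mono by blast
qed

lemma bernoulli_sol_tendsto_zero:
  assumes "0 < p" "kap < 0" "lam * y0 ^ p < - kap"
  shows "(bernoulli_sol p lam kap y0 \<longlongrightarrow> 0) at_top"
proof -
  have exp_decay: "((\<lambda>t. exp (c * t)) \<longlongrightarrow> 0) at_top" if "c < 0" for c :: real
    using filterlim_compose [OF exp_at_bot filterlim_tendsto_neg_mult_at_bot [OF tendsto_const that filterlim_ident]] .
  have "real p * kap < 0"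
    using assms by (simp add: mult_pos_neg)
  then have "(bernoulli_denom p lam kap y0 \<longlongrightarrow> 1 + lam * y0 ^ p / kap * (1 - 0)) at_top"
    unfolding bernoulli_denom_def [abs_def] by (intro tendsto_intros exp_decay)
  moreover have "- 1 < lam * y0 ^ p / kap"
    using assms by (simp add: less_divide_eq)
  ultimately have "(bernoulli_sol p lam kap y0 \<longlongrightarrow> y0 * 0 * (1 + lam * y0 ^ p / kap) powr (- 1 / real p)) at_top"
    unfolding bernoulli_sol_def [abs_def] using \<open>kap < 0\<close> by (intro tendsto_intros exp_decay) auto
  then show ?thesis
    by simp
qed

section \<open>Escape thresholds\<close>

lemma root_less_iff_less_power:
  assumes "0 < n" "odd n \<or> 0 \<le> y"
  shows "root n a < y \<longleftrightarrow> a < y ^ n"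
proof -
  have "root n (y ^ n) = y"
    using assms by (auto simp: odd_real_root_power_cancel real_root_power_cancel)
  then show ?thesis
    using real_root_less_iff [OF \<open>0 < n\<close>, of a "y ^ n"] by simp
qed

lemma less_root_iff_power_less:
  assumes "odd n"
  shows "y < root n a \<longleftrightarrow> y ^ n < a"
  using real_root_less_iff [of n "y ^ n" a] assms
  by (auto simp: odd_real_root_power_cancel odd_pos)

lemma c_thr_nonneg: "0 < lam \<Longrightarrow> kap \<le> 0 \<Longrightarrow> 0 \<le> c_thr p lam kap"
  by (simp add: c_thr_def real_root_ge_zero divide_nonpos_pos)

lemma c_thr_nonpos: "lam < 0 \<Longrightarrow> kap \<le> 0 \<Longrightarrow> c_thr p lam kap \<le> 0"
  by (simp add: c_thr_def real_root_ge_zero divide_nonpos_neg)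

lemma esc_cond_iff:
  assumes "0 < p" "kap < 0"
  shows "esc_cond p lam kap y0 \<longleftrightarrow> - kap < lam * y0 ^ p"
proof (cases lam "0 :: real" rule: linorder_cases)
  case less
  have "c_thr p lam kap = root p (- kap / lam)"
    using less by (simp add: c_thr_def real_root_minus)
  moreover have "lam * y0 ^ p \<le> 0" if "even p"
    using less that by (simp add: mult_nonpos_nonneg zero_le_even_power)
  moreover have "y0 ^ p < - kap / lam \<longleftrightarrow> - kap < lam * y0 ^ p"
    using neg_less_divide_eq [OF less, of "y0 ^ p" "- kap"] by (simp add: mult.commute)
  ultimately show ?thesis
    using less assms by (cases "even p") (auto simp: esc_cond_def less_root_iff_power_less)
next
  case greater
  then have "- kap / lam < y0 ^ p \<longleftrightarrow> - kap < lam * y0 ^ p"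
    using pos_divide_less_eq [OF greater, of "- kap" "y0 ^ p"] by (simp add: mult.commute)
  then show ?thesis
    using greater assms
    by (cases "even p") (auto simp: esc_cond_def c_thr_def root_less_iff_less_power power_even_abs)
qed (use assms in \<open>simp add: esc_cond_def\<close>)

lemma less_c_thr_imp_power_less:
  assumes "odd p" "0 < lam" "y0 < c_thr p lam kap"
  shows "lam * y0 ^ p < - kap"
  using assms pos_less_divide_eq [OF \<open>0 < lam\<close>, of "y0 ^ p" "- kap"]
  by (simp add: c_thr_def less_root_iff_power_less mult.commute)

section \<open>Uniqueness for scalar equations\<close>

lemma lipschitz_on_Icc_if_continuous_derivative:
  fixes g g' :: "real \<Rightarrow> real"
  assumes deriv: "\<And>x. (g has_real_derivative g' x) (at x)" and cont: "continuous_on UNIV g'"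
  shows "\<exists>L. L-lipschitz_on {a..b} g"
proof -
  have "compact (g' ` {a..b})"
    using cont by (intro compact_continuous_image) (auto intro: continuous_on_subset)
  then obtain B where B: "\<forall>x\<in>{a..b}. \<bar>g' x\<bar> \<le> B"
    by (auto dest!: compact_imp_bounded simp: bounded_iff)
  have "(max 0 B)-lipschitz_on {a..b} g"
  proof (rule lipschitz_onI)
    fix x y assume "x \<in> {a..b}" "y \<in> {a..b}"
    then have "norm (g x - g y) \<le> max 0 B * norm (x - y)"
    proof (rule field_differentiable_bound [of "{a..b}" g g', rotated 3])
      show "(g has_field_derivative g' z) (at z within {a..b})" for z
        using deriv by (rule has_field_derivative_at_within)
      show "norm (g' z) \<le> max 0 B" if "z \<in> {a..b}" for z
        using B that by fastforce
    qed auto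
    then show "dist (g x) (g y) \<le> max 0 B * dist x y"
      by (simp add: dist_norm)
  qed simp
  then show ?thesis ..
qed

lemma lipschitz_on_Icc_linear_plus_power:
  fixes c d :: real
  shows "\<exists>L. L-lipschitz_on {a..b} (\<lambda>y. c * y + d * y ^ n)"
proof (rule lipschitz_on_Icc_if_continuous_derivative)
  show "((\<lambda>y. c * y + d * y ^ n) has_real_derivative c + d * (real n * y ^ (n - 1))) (at y)" for y
    by (auto intro!: derivative_eq_intros)
  show "continuous_on UNIV (\<lambda>y. c + d * (real n * y ^ (n - 1)))"
    by (intro continuous_intros)
qed

lemma lipschitz_on_one_sided:
  fixes g :: "real \<Rightarrow> real"
  assumes "L-lipschitz_on S g" "u \<in> S" "w \<in> S"
  shows "(u - w) * (g u - g w) \<le> L * (u - w)\<^sup>2"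
proof -
  have "\<bar>g u - g w\<bar> \<le> L * \<bar>u - w\<bar>"
    using lipschitz_on_normD [OF assms] by simp
  then have "\<bar>u - w\<bar> * \<bar>g u - g w\<bar> \<le> \<bar>u - w\<bar> * (L * \<bar>u - w\<bar>)"
    by (rule mult_left_mono) simp
  then show ?thesis
    by (simp add: power2_eq_square abs_mult [symmetric] mult.left_commute)
qed

lemma scalar_ode_solution_unique:
  fixes g y z :: "real \<Rightarrow> real"
  assumes lipschitz: "\<And>a b. \<exists>L. L-lipschitz_on {a..b} g"
    and y: "\<And>t. t \<in> {0..<T} \<Longrightarrow> (y has_real_derivative g (y t)) (at t within {0..<T})"
    and z: "\<And>t. t \<in> {0..<T} \<Longrightarrow> (z has_real_derivative g (z t)) (at t within {0..<T})"
    and init: "y 0 = z 0" and t1: "t1 \<in> {0..<T}"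
  shows "y t1 = z t1"
proof -
  have "continuous_on {0..<T} y" "continuous_on {0..<T} z"
    by (rule DERIV_continuous_on, erule y, rule DERIV_continuous_on, erule z)
  moreover have "{0..t1} \<subseteq> {0..<T}"
    using t1 by auto
  ultimately have cont: "continuous_on {0..t1} y" "continuous_on {0..t1} z"
    by (auto intro: continuous_on_subset)
  then have "bounded (y ` {0..t1} \<union> z ` {0..t1})"
    by (intro compact_imp_bounded compact_Un compact_continuous_image) auto
  then obtain M where M: "\<forall>u \<in> y ` {0..t1} \<union> z ` {0..t1}. \<bar>u\<bar> \<le> M"
    by (auto simp: bounded_iff)
  obtain L where L: "L-lipschitz_on {-M..M} g"
    using lipschitz by blast
  define h where "h t = (y t - z t)\<^sup>2 * exp (- (2 * L * t))" for t
  have "h t1 \<le> h 0"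
  proof (rule DERIV_nonpos_imp_decreasing_open [of 0 t1 h])
    show "0 \<le> t1"
      using t1 by simp
    show "continuous_on {0..t1} h"
      unfolding h_def by (intro continuous_intros cont)
  next
    fix t assume t: "0 < t" "t < t1"
    then have "t \<in> interior {0..<T}"
      using t1 by auto
    then have "at t within {0..<T} = at t"
      by (rule at_within_interior)
    then have "(y has_real_derivative g (y t)) (at t)" "(z has_real_derivative g (z t)) (at t)"
      using y [of t] z [of t] t t1 by auto
    then have deriv: "(h has_real_derivative
        2 * exp (- (2 * L * t)) * ((y t - z t) * (g (y t) - g (z t)) - L * (y t - z t)\<^sup>2)) (at t)"
      unfolding h_def [abs_def] by (auto intro!: derivative_eq_intros simp: algebra_simps power2_eq_square)
    have "y t \<in> y ` {0..t1} \<union> z ` {0..t1}" "z t \<in> y ` {0..t1} \<union> z ` {0..t1}"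
      using t by auto
    then have "\<bar>y t\<bar> \<le> M" "\<bar>z t\<bar> \<le> M"
      using M by blast+
    then have "y t \<in> {-M..M}" "z t \<in> {-M..M}"
      by (auto simp: abs_le_iff)
    then have "(y t - z t) * (g (y t) - g (z t)) \<le> L * (y t - z t)\<^sup>2"
      by (rule lipschitz_on_one_sided [OF L])
    then have "2 * exp (- (2 * L * t)) * ((y t - z t) * (g (y t) - g (z t)) - L * (y t - z t)\<^sup>2) \<le> 0"
      by (intro mult_nonneg_nonpos) auto
    then show "\<exists>D. (h has_real_derivative D) (at t) \<and> D \<le> 0"
      using deriv by blast
  qed
  then have "(y t1 - z t1)\<^sup>2 \<le> 0"
    by (simp add: h_def init mult_le_0_iff)
  then show ?thesis
    by simp
qed

section \<open>Modal decomposition of the vector field\<close>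

lemma prod_list_map_mult:
  fixes f g :: "'a \<Rightarrow> real"
  shows "prod_list (map (\<lambda>j. f j * g j) xs) = prod_list (map f xs) * prod_list (map g xs)"
  by (induction xs) auto

lemma sum_prod_list_lists_length:
  fixes f :: "'n::finite \<Rightarrow> real"
  shows "(\<Sum>is\<in>{is. length is = m}. prod_list (map f is)) = (\<Sum>j\<in>UNIV. f j) ^ m"
proof (induction m)
  case 0
  then show ?case
    by simp
next
  case (Suc m)
  have "{is :: 'n list. length is = Suc m} = (\<lambda>(i, is). i # is) ` (UNIV \<times> {is. length is = m})"
    by (auto simp: length_Suc_conv image_iff)
  moreover have "inj_on (\<lambda>(i, is). i # is) (UNIV \<times> {is :: 'n list. length is = m})"
    by (auto simp: inj_on_def)
  ultimately have "(\<Sum>is\<in>{is. length is = Suc m}. prod_list (map f is))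
      = (\<Sum>(i, is)\<in>UNIV \<times> {is :: 'n list. length is = m}. f i * prod_list (map f is))"
    by (simp add: sum.reindex case_prod_unfold)
  also have "\<dots> = (\<Sum>i\<in>UNIV. f i * (\<Sum>is\<in>{is :: 'n list. length is = m}. prod_list (map f is)))"
    by (simp add: sum.cartesian_product [symmetric] sum_distrib_left)
  finally show ?case
    by (simp add: Suc.IH sum_distrib_right [symmetric])
qed

lemma tensor_apply_sum_tensor_pow:
  fixes v :: "'n::finite \<Rightarrow> real^'n"
  shows "tensor_apply (\<lambda>is. \<Sum>r\<in>UNIV. lam r * tensor_pow (v r) is) k x
    = (\<Sum>r\<in>UNIV. (lam r * (v r \<bullet> x) ^ (k - 1)) *\<^sub>R v r)"
proof (rule vec_eq_iff [THEN iffD2], rule allI)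
  fix i
  have "tensor_apply (\<lambda>is. \<Sum>r\<in>UNIV. lam r * tensor_pow (v r) is) k x $ i
     = (\<Sum>is\<in>{is. length is = k - 1}. \<Sum>r\<in>UNIV.
         lam r * v r $ i * prod_list (map (\<lambda>j. v r $ j * x $ j) is))"
    unfolding tensor_apply_def tensor_pow_def
    by (simp add: sum_distrib_right prod_list_map_mult mult.assoc)
  also have "\<dots> = (\<Sum>r\<in>UNIV. lam r * v r $ i *
      (\<Sum>is\<in>{is. length is = k - 1}. prod_list (map (\<lambda>j. v r $ j * x $ j) is)))"
    by (subst sum.swap) (simp add: sum_distrib_left)
  also have "\<dots> = (\<Sum>r\<in>UNIV. (lam r * (v r \<bullet> x) ^ (k - 1)) *\<^sub>R v r) $ i"
    by (simp add: sum_prod_list_lists_length inner_vec_def sum_component algebra_simps)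
  finally show "tensor_apply (\<lambda>is. \<Sum>r\<in>UNIV. lam r * tensor_pow (v r) is) k x $ i
     = (\<Sum>r\<in>UNIV. (lam r * (v r \<bullet> x) ^ (k - 1)) *\<^sub>R v r) $ i" .
qed

lemma sum_outer_mult_vector:
  fixes v :: "'n::finite \<Rightarrow> real^'n"
  shows "(\<Sum>r\<in>UNIV. kap r *\<^sub>R outer (v r) (v r)) *v x = (\<Sum>r\<in>UNIV. (kap r * (v r \<bullet> x)) *\<^sub>R v r)"
proof (rule vec_eq_iff [THEN iffD2], rule allI)
  fix i
  have "((\<Sum>r\<in>UNIV. kap r *\<^sub>R outer (v r) (v r)) *v x) $ i
      = (\<Sum>j\<in>UNIV. \<Sum>r\<in>UNIV. kap r * (v r $ i * v r $ j) * x $ j)"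
    by (simp add: matrix_vector_mult_def outer_def sum_component sum_distrib_right)
  also have "\<dots> = (\<Sum>r\<in>UNIV. kap r * v r $ i * (\<Sum>j\<in>UNIV. v r $ j * x $ j))"
    by (subst sum.swap) (simp add: sum_distrib_left algebra_simps)
  finally show "((\<Sum>r\<in>UNIV. kap r *\<^sub>R outer (v r) (v r)) *v x) $ i
      = (\<Sum>r\<in>UNIV. (kap r * (v r \<bullet> x)) *\<^sub>R v r) $ i"
    by (simp add: sum_component inner_vec_def algebra_simps)
qed

lemma inner_sum_orthonormal:
  fixes v :: "'n::finite \<Rightarrow> real^'n"
  assumes "\<forall>i j. v i \<bullet> v j = (if i = j then 1 else 0)"
  shows "v s \<bullet> (\<Sum>r\<in>UNIV. c r *\<^sub>R v r) = c s"
proof -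
  have "v s \<bullet> (\<Sum>r\<in>UNIV. c r *\<^sub>R v r) = (\<Sum>r\<in>UNIV. c r * (v s \<bullet> v r))"
    by (simp add: inner_sum_right)
  also have "\<dots> = (\<Sum>r\<in>UNIV. if r = s then c r else 0)"
    using assms by (intro sum.cong) auto
  finally show ?thesis
    by simp
qed

lemma orthonormal_expansion:
  fixes v :: "'n::finite \<Rightarrow> real^'n"
  assumes orthonormal: "\<forall>i j. v i \<bullet> v j = (if i = j then 1 else 0)"
  shows "x = (\<Sum>r\<in>UNIV. (v r \<bullet> x) *\<^sub>R v r)"
proof -
  define M :: "real^'n^'n" where "M = (\<chi> r j. v r $ j)"
  \<comment> \<open>A square matrix with orthonormal rows is orthogonal, so its columns are orthonormal too.\<close>
  have "M ** transpose M = mat 1"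
    using orthonormal by (simp add: M_def matrix_matrix_mult_def transpose_def mat_def vec_eq_iff inner_vec_def)
  then have "transpose M ** M = mat 1"
    using matrix_left_right_inverse by blast
  then have columns: "(\<Sum>r\<in>UNIV. v r $ i * v r $ j) = (if i = j then 1 else 0)" for i j
    by (simp add: M_def matrix_matrix_mult_def transpose_def mat_def vec_eq_iff mult.commute)
  show ?thesis
  proof (rule vec_eq_iff [THEN iffD2], rule allI)
    fix i
    have "(\<Sum>r\<in>UNIV. (v r \<bullet> x) *\<^sub>R v r) $ i = (\<Sum>r\<in>UNIV. \<Sum>j\<in>UNIV. v r $ j * x $ j * v r $ i)"
      by (simp add: sum_component inner_vec_def sum_distrib_right)
    also have "\<dots> = (\<Sum>j\<in>UNIV. x $ j * (\<Sum>r\<in>UNIV. v r $ i * v r $ j))"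
      by (subst sum.swap) (simp add: sum_distrib_left algebra_simps)
    finally show "x $ i = (\<Sum>r\<in>UNIV. (v r \<bullet> x) *\<^sub>R v r) $ i"
      by (simp add: columns if_distrib cong: if_cong)
  qed
qed

section \<open>Diagonal systems\<close>

locale diagonal_system =
  fixes v :: "'n::finite \<Rightarrow> real^'n" and g :: "'n \<Rightarrow> real \<Rightarrow> real"
  assumes orthonormal: "\<forall>i j. v i \<bullet> v j = (if i = j then 1 else 0)"
    and lipschitz_on_Icc: "\<And>r a b. \<exists>L. L-lipschitz_on {a..b} (g r)"
begin

definition vector_field :: "real^'n \<Rightarrow> real^'n" where
  "vector_field x = (\<Sum>r\<in>UNIV. g r (v r \<bullet> x) *\<^sub>R v r)"

lemma mode_has_real_derivative:
  assumes "ode_sol vector_field x0 T x" "t \<in> {0..<T}"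
  shows "((\<lambda>t. v r \<bullet> x t) has_real_derivative g r (v r \<bullet> x t)) (at t within {0..<T})"
proof -
  have "(x has_vector_derivative vector_field (x t)) (at t within {0..<T})"
    using assms by (simp add: ode_sol_def)
  then have "((\<lambda>t. v r \<bullet> x t) has_vector_derivative v r \<bullet> vector_field (x t)) (at t within {0..<T})"
    by (rule bounded_linear.has_vector_derivative [OF bounded_linear_inner_right])
  then show ?thesis
    by (simp add: has_real_derivative_iff_has_vector_derivative vector_field_def inner_sum_orthonormal [OF orthonormal])
qed

lemma mode_eq_scalar_solution:
  assumes sol: "ode_sol vector_field x0 T x"
    and Y: "\<And>t. t \<in> {0..<S} \<Longrightarrow> (Y has_real_derivative g r (Y t)) (at t within {0..<S})"
    and init: "Y 0 = v r \<bullet> x0" and t: "t \<in> {0..<T}" "t < S"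
  shows "v r \<bullet> x t = Y t"
proof -
  have "((\<lambda>t. v r \<bullet> x t) has_real_derivative g r (v r \<bullet> x s)) (at s within {0..<min T S})"
    if "s \<in> {0..<min T S}" for s
    by (rule DERIV_subset [OF mode_has_real_derivative [OF sol]]) (use that in auto)
  moreover have "(Y has_real_derivative g r (Y s)) (at s within {0..<min T S})"
    if "s \<in> {0..<min T S}" for s
    by (rule DERIV_subset [OF Y]) (use that in auto)
  moreover have "v r \<bullet> x 0 = Y 0" "t \<in> {0..<min T S}"
    using sol init t by (auto simp: ode_sol_def)
  ultimately show ?thesis
    by (rule scalar_ode_solution_unique [OF lipschitz_on_Icc])
qed

lemma ode_sol_of_mode_solutions:
  assumes Y: "\<And>r t. t \<in> {0..<T} \<Longrightarrow> (Y r has_real_derivative g r (Y r t)) (at t within {0..<T})"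
    and init: "\<And>r. Y r 0 = v r \<bullet> x0"
  shows "ode_sol vector_field x0 T (\<lambda>t. \<Sum>r\<in>UNIV. Y r t *\<^sub>R v r)"
  unfolding ode_sol_def
proof (intro conjI ballI)
  show "(\<Sum>r\<in>UNIV. Y r 0 *\<^sub>R v r) = x0"
    using orthonormal_expansion [OF orthonormal, of x0] by (simp add: init)
  fix t assume "t \<in> {0..<T}"
  then have "((\<lambda>t. \<Sum>r\<in>UNIV. Y r t *\<^sub>R v r) has_vector_derivative
      (\<Sum>r\<in>UNIV. g r (Y r t) *\<^sub>R v r)) (at t within {0..<T})"
    using Y by (auto intro!: derivative_eq_intros)
  then show "((\<lambda>t. \<Sum>r\<in>UNIV. Y r t *\<^sub>R v r) has_vector_derivative
      vector_field (\<Sum>r\<in>UNIV. Y r t *\<^sub>R v r)) (at t within {0..<T})"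
    by (simp add: vector_field_def inner_sum_orthonormal [OF orthonormal])
qed

lemma ode_sol_not_beyond_mode_blowup:
  assumes sol: "ode_sol vector_field x0 T' x" and "0 < T"
    and agree: "\<forall>\<^sub>F t in at_left T. v r \<bullet> x t = Y t"
    and blowup: "filterlim Y at_infinity (at_left T)"
  shows "T' \<le> T"
proof (rule ccontr)
  assume "\<not> T' \<le> T"
  then have "T \<in> {0..<T'}"
    using \<open>0 < T\<close> by simp
  then have "continuous (at T within {0..<T'}) (\<lambda>t. v r \<bullet> x t)"
    by (rule DERIV_continuous [OF mode_has_real_derivative [OF sol]])
  then have "((\<lambda>t. v r \<bullet> x t) \<longlongrightarrow> v r \<bullet> x T) (at T within {0..T})"
    unfolding continuous_within
    by (rule tendsto_within_subset) (use \<open>\<not> T' \<le> T\<close> in auto)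
  then have "(Y \<longlongrightarrow> v r \<bullet> x T) (at_left T)"
    unfolding at_within_Icc_at_left [OF \<open>0 < T\<close>] using agree by (rule Lim_transform_eventually)
  then show False
    using not_tendsto_and_filterlim_at_infinity [OF _ _ blowup] by simp
qed

lemma norm_tendsto_at_top_if_mode_blowup:
  assumes agree: "\<forall>\<^sub>F t in F. v r \<bullet> x t = Y t"
    and blowup: "filterlim Y at_infinity F"
  shows "filterlim (\<lambda>t. norm (x t)) at_top F"
proof (rule filterlim_at_top_mono [OF filterlim_at_infinity_imp_norm_at_top [OF blowup]])
  have "norm (v r) = 1"
    using orthonormal by (simp add: norm_eq_sqrt_inner)
  then have bound: "norm (v r \<bullet> x t) \<le> norm (x t)" for t
    using Cauchy_Schwarz_ineq2 [of "v r" "x t"] by simp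
  show "\<forall>\<^sub>F t in F. norm (Y t) \<le> norm (x t)"
    using agree
  proof (rule eventually_mono)
    fix t assume "v r \<bullet> x t = Y t"
    then show "norm (Y t) \<le> norm (x t)"
      using bound [of t] by simp
  qed
qed

lemma escapes_atI:
  assumes "0 < T"
    and Y: "\<And>r t. t \<in> {0..<T} \<Longrightarrow> (Y r has_real_derivative g r (Y r t)) (at t within {0..<T})"
    and init: "\<And>r. Y r 0 = v r \<bullet> x0"
    and blowup: "filterlim (Y r0) at_infinity (at_left T)"
  shows "escapes_at vector_field x0 T"
proof -
  have agree: "\<forall>\<^sub>F t in at_left T. v r0 \<bullet> x t = Y r0 t"
    if "ode_sol vector_field x0 T' x" "T \<le> T'" for x T'
    unfolding eventually_at_left_field using \<open>0 < T\<close> that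
      mode_eq_scalar_solution [OF that(1) Y [where r = r0] init [of r0]]
    by (intro exI [of _ 0]) auto
  have "T' \<le> T" if sol: "ode_sol vector_field x0 T' x" for x T'
  proof (cases "T \<le> T'")
    case True
    show ?thesis
      by (rule ode_sol_not_beyond_mode_blowup [OF sol \<open>0 < T\<close> agree [OF sol True] blowup])
  qed simp
  moreover have "filterlim (\<lambda>t. norm (x t)) at_top (at_left T)" if "ode_sol vector_field x0 T x" for x
    using agree [OF that order_refl] blowup by (rule norm_tendsto_at_top_if_mode_blowup)
  ultimately show ?thesis
    unfolding escapes_at_def using \<open>0 < T\<close> ode_sol_of_mode_solutions [OF Y init] by blast
qed

lemma mode_escapesI:
  assumes "0 < T"
    and Y: "\<And>t. t \<in> {0..<T} \<Longrightarrow> (Y has_real_derivative g r (Y t)) (at t within {0..<T})"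
    and init: "Y 0 = v r \<bullet> x0" and lim: "filterlim Y L (at_left T)"
  shows "mode_escapes vector_field x0 (v r) (g r) T L"
proof -
  have "v r \<bullet> x t = Y t" if "ode_sol vector_field x0 T' x" "t \<in> {0..<T'}" "t < T" for T' x t
    by (rule mode_eq_scalar_solution [OF that(1) Y init that(2,3)])
  then show ?thesis
    unfolding mode_escapes_def using \<open>0 < T\<close> Y init lim by (intro conjI exI [of _ Y]) auto
qed

lemma mode_global_to_zeroI:
  assumes Y: "\<And>t. 0 \<le> t \<Longrightarrow> (Y has_real_derivative g r (Y t)) (at t within {0..})"
    and init: "Y 0 = v r \<bullet> x0" and lim: "(Y \<longlongrightarrow> 0) at_top"
  shows "mode_global_to_zero vector_field x0 (v r) (g r)"
proof -
  have Y_Ico: "(Y has_real_derivative g r (Y t)) (at t within {0..<T})" if "t \<in> {0..<T}" for t T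
    by (rule DERIV_subset [OF Y]) (use that in auto)
  have "v r \<bullet> x t = Y t" if "ode_sol vector_field x0 T x" "t \<in> {0..<T}" for T x t
    using that(2) by (intro mode_eq_scalar_solution [OF that(1) Y_Ico [of _ T] init that(2)]) auto
  then show ?thesis
    unfolding mode_global_to_zero_def using Y init lim by (intro exI [of _ Y]) auto
qed

end

locale modal_bernoulli_system =
  fixes v :: "'n::finite \<Rightarrow> real^'n" and lam kap :: "'n \<Rightarrow> real" and p :: nat
  assumes orthonormal_modes: "\<forall>i j. v i \<bullet> v j = (if i = j then 1 else 0)"
    and kap_neg: "\<And>r. kap r < 0" and p_pos: "0 < p"
begin

sublocale diagonal_system v "\<lambda>r y. kap r * y + lam r * y ^ Suc p"
  by unfold_locales (rule orthonormal_modes, rule lipschitz_on_Icc_linear_plus_power)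

abbreviation mode_sol :: "real^'n \<Rightarrow> 'n \<Rightarrow> real \<Rightarrow> real" where
  "mode_sol x0 r \<equiv> bernoulli_sol p (lam r) (kap r) (v r \<bullet> x0)"

abbreviation escape_time :: "real^'n \<Rightarrow> 'n \<Rightarrow> real" where
  "escape_time x0 r \<equiv> T_esc_r p (lam r) (kap r) (v r \<bullet> x0)"

abbreviation escaping_modes :: "real^'n \<Rightarrow> 'n set" where
  "escaping_modes x0 \<equiv> {r. esc_cond p (lam r) (kap r) (v r \<bullet> x0)}"

lemma mode_sol_has_real_derivative:
  assumes "0 \<le> t" "r \<in> escaping_modes x0 \<Longrightarrow> t < escape_time x0 r"
  shows "(mode_sol x0 r has_real_derivative kap r * mode_sol x0 r t + lam r * mode_sol x0 r t ^ Suc p)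
    (at t within S)"
  using assms by (intro bernoulli_sol_has_real_derivative_before_escape p_pos kap_neg)
    (auto simp: esc_cond_iff [OF p_pos kap_neg])

lemma escape_time_pos: "r \<in> escaping_modes x0 \<Longrightarrow> 0 < escape_time x0 r"
  by (simp add: T_esc_r_pos esc_cond_iff p_pos kap_neg)

lemma escapes_at_first_escape_time:
  assumes "escaping_modes x0 \<noteq> {}"
  shows "escapes_at vector_field x0 (Min (escape_time x0 ` escaping_modes x0))"
proof -
  have "Min (escape_time x0 ` escaping_modes x0) \<in> escape_time x0 ` escaping_modes x0"
    using assms by (intro Min_in) auto
  then obtain r0 where r0: "r0 \<in> escaping_modes x0"
    "Min (escape_time x0 ` escaping_modes x0) = escape_time x0 r0"
    by auto
  then have first: "escape_time x0 r0 \<le> escape_time x0 r" if "r \<in> escaping_modes x0" for r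
    using that Min_le [of "escape_time x0 ` escaping_modes x0" "escape_time x0 r"] by simp
  have "escapes_at vector_field x0 (escape_time x0 r0)"
  proof (rule escapes_atI [of _ "mode_sol x0" _ r0])
    show "0 < escape_time x0 r0"
      by (rule escape_time_pos [OF r0(1)])
    show "filterlim (mode_sol x0 r0) at_infinity (at_left (escape_time x0 r0))"
      using r0 by (simp add: bernoulli_sol_tendsto_at_infinity esc_cond_iff p_pos kap_neg)
    show "(mode_sol x0 r has_real_derivative kap r * mode_sol x0 r t + lam r * mode_sol x0 r t ^ Suc p)
        (at t within {0..<escape_time x0 r0})" if "t \<in> {0..<escape_time x0 r0}" for r t
      using that first by (intro mode_sol_has_real_derivative) force+
  qed simp
  with r0 show ?thesis
    by simp
qed

lemma escaping_mode_escapes: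
  assumes "r \<in> escaping_modes x0" and "filterlim (mode_sol x0 r) L (at_left (escape_time x0 r))"
  shows "mode_escapes vector_field x0 (v r) (\<lambda>y. kap r * y + lam r * y ^ Suc p) (escape_time x0 r) L"
proof (rule mode_escapesI [OF escape_time_pos [OF assms(1)] _ _ assms(2)])
  show "(mode_sol x0 r has_real_derivative kap r * mode_sol x0 r t + lam r * mode_sol x0 r t ^ Suc p)
      (at t within {0..<escape_time x0 r})" if "t \<in> {0..<escape_time x0 r}" for t
    using that by (intro mode_sol_has_real_derivative) auto
qed simp

lemma mode_escapes_at_top:
  assumes "odd p" "0 < lam r" "c_thr p (lam r) (kap r) < v r \<bullet> x0"
  shows "mode_escapes vector_field x0 (v r) (\<lambda>y. kap r * y + lam r * y ^ Suc p) (escape_time x0 r) at_top"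
proof -
  have "r \<in> escaping_modes x0"
    using assms by (simp add: esc_cond_def)
  moreover have "0 < v r \<bullet> x0"
    using assms c_thr_nonneg [OF \<open>0 < lam r\<close> less_imp_le [OF kap_neg [of r]], of p] by linarith
  ultimately show ?thesis
    using esc_cond_iff [OF p_pos kap_neg]
    by (intro escaping_mode_escapes bernoulli_sol_tendsto_at_top p_pos kap_neg) auto
qed

lemma mode_escapes_at_bot:
  assumes "odd p" "lam r < 0" "v r \<bullet> x0 < c_thr p (lam r) (kap r)"
  shows "mode_escapes vector_field x0 (v r) (\<lambda>y. kap r * y + lam r * y ^ Suc p) (escape_time x0 r) at_bot"
proof -
  have "r \<in> escaping_modes x0"
    using assms by (simp add: esc_cond_def)
  moreover have "v r \<bullet> x0 < 0"
    using assms c_thr_nonpos [OF \<open>lam r < 0\<close> less_imp_le [OF kap_neg [of r]], of p] by linarith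
  ultimately show ?thesis
    using esc_cond_iff [OF p_pos kap_neg]
    by (intro escaping_mode_escapes bernoulli_sol_tendsto_at_bot p_pos kap_neg) auto
qed

lemma mode_global_to_zero_below_c_thr:
  assumes "odd p" "0 < lam r" "v r \<bullet> x0 < c_thr p (lam r) (kap r)"
  shows "mode_global_to_zero vector_field x0 (v r) (\<lambda>y. kap r * y + lam r * y ^ Suc p)"
proof (rule mode_global_to_zeroI)
  have below: "lam r * (v r \<bullet> x0) ^ p < - kap r"
    using assms by (rule less_c_thr_imp_power_less)
  then show "(mode_sol x0 r \<longlongrightarrow> 0) at_top"
    by (simp add: bernoulli_sol_tendsto_zero p_pos kap_neg)
  from below have "r \<notin> escaping_modes x0"
    by (simp add: esc_cond_iff p_pos kap_neg)
  then show "(mode_sol x0 r has_real_derivative kap r * mode_sol x0 r t + lam r * mode_sol x0 r t ^ Suc p)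
      (at t within {0..})" if "0 \<le> t" for t
    using that by (intro mode_sol_has_real_derivative) auto
qed simp

end

theorem theorem3:
  fixes v :: "'n::finite \<Rightarrow> real^'n" and lam kap :: "'n \<Rightarrow> real" and k p :: nat
    and x0 :: "real^'n" and A :: "'n tensor" and K :: "real^'n^'n"
  assumes k: "k \<ge> 3" and p: "p = k - 2"
    and orthonormal: "\<forall>i j. v i \<bullet> v j = (if i = j then 1 else 0)"
    and kap_neg: "\<forall>r. kap r < 0"
    and A: "A = (\<lambda>is. \<Sum>r\<in>UNIV. lam r * tensor_pow (v r) is)"
    and K: "K = (\<Sum>r\<in>UNIV. kap r *\<^sub>R outer (v r) (v r))"
  shows
    "(let F = (\<lambda>x. K *v x + tensor_apply A k x);
          E = {r. esc_cond p (lam r) (kap r) (v r \<bullet> x0)};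
          Tr = (\<lambda>r. T_esc_r p (lam r) (kap r) (v r \<bullet> x0));
          g = (\<lambda>r y. kap r * y + lam r * y ^ (k - 1))
      in (E \<noteq> {} \<longrightarrow> escapes_at F x0 (Min (Tr ` E))) \<and>
         (\<forall>r. odd p \<and> lam r > 0 \<and> v r \<bullet> x0 > c_thr p (lam r) (kap r) \<longrightarrow>
              mode_escapes F x0 (v r) (g r) (Tr r) at_top) \<and>
         (\<forall>r. odd p \<and> lam r > 0 \<and> v r \<bullet> x0 < c_thr p (lam r) (kap r) \<longrightarrow>
              mode_global_to_zero F x0 (v r) (g r)) \<and>
         (\<forall>r. odd p \<and> lam r < 0 \<and> v r \<bullet> x0 < c_thr p (lam r) (kap r) \<longrightarrow>
              mode_escapes F x0 (v r) (g r) (Tr r) at_bot))"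
proof -
  have "0 < p" and k_p: "k - 1 = Suc p"
    using k p by auto
  interpret modal_bernoulli_system v lam kap p
    using orthonormal kap_neg \<open>0 < p\<close> by unfold_locales auto
  have F: "(\<lambda>x. K *v x + tensor_apply A k x) = vector_field"
    unfolding vector_field_def A K sum_outer_mult_vector tensor_apply_sum_tensor_pow k_p
    by (simp add: fun_eq_iff scaleR_add_left sum.distrib)
  show ?thesis
    unfolding Let_def F k_p
    by (intro conjI allI impI escapes_at_first_escape_time mode_escapes_at_top
        mode_global_to_zero_below_c_thr mode_escapes_at_bot) auto
qed

end
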